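(* Let $k\ge 1$ and $r\ge 0$ be integers. If a partition of the vertex set of $G_k$ into two sides has a biadjacency matrix of rank at most $r$ (over $\mathbb{Z}_2$), then the partition has at most $4r+1$ blocks.
   Context: $G_k$ is the following graph on vertices $v_1,\dots,v_{3^k}$ (ordered left to right along the boundary line of its drawing). It is defined by a drawing in the closed upper half-plane. The $3^k$ vertices lie on the horizontal boundary line and consecutive vertices are joined by a track along the line; vertices in odd positions are blue, in even positions yellow, and yellow vertices have no other tracks. The remaining tracks lie in levels $0,\dots,k-1$ (horizontal slabs, bottom to top). The bottom line of level $i$ carries points $p_{i,j}$, $0\le j<3^{k-i}/2$, left to right (the blue vertices for $i=0$, junctions for $i>0$), where tracks enter with vertical tangent. In level $i$, consecutive $p_{i,j},p_{i,j+1}$ are joined by a semicircle, subdivided by two junctions into three arcs when $j$ is a multiple of three (except that the single top-level semicircle joining $p_{k-1,0},p_{k-1,1}$ is not subdivided), a single track otherwise. For $i<k-1$ and each subdivided semicircle joining $p_{i,j},p_{i,j+1}$, tracks connect its two subdivision junctions to $p_{i+1,j/3}$, oriented so that each one connects $p_{i+1,j/3}$ downward by a smooth curve through the semicircle to $p_{i,j}$ and $p_{i,j+1}$. At every junction all incident tracks share a tangent. Two vertices of $G_k$ are adjacent iff some smooth curve contained in the union of the tracks (passing through junctions smoothly) connects them. (In particular each yellow vertex is adjacent exactly to its two neighbors in the order.) The biadjacency matrix of a partition $(A,B)$ of the vertices is the $0/1$ matrix over $\mathbb{Z}_2$ with rows indexed by $A$, columns by $B$, entry $1$ iff the two vertices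 are adjacent. A block of a partition of the vertices of $G_k$ into two sides is a maximal contiguous subsequence of $v_1,\dots,v_{3^k}$ all of whose vertices belong to the same side. *)

theory Defs
  imports "Jordan_Normal_Form.DL_Rank" "HOL-Library.Z2"
begin

(* Vertices of G_k are the positions 1..3^k (v_p is vertex p).
   Odd positions are blue, even yellow.  The blue vertex at position 2a+1 is p_{0,a}.

   desc i j = set of indices a of blue vertices p_{0,a} reachable from the point p_{i,j}
   by a smooth curve leaving p_{i,j} downward (equivalently, arriving at p_{i,j} from
   below).  Leaving p_{i+1,j} downward one takes one of the two tracks to the
   subdivided semicircle joining p_{i,3j}, p_{i,3j+1} and arrives at p_{i,3j} resp.
   p_{i,3j+1} from above, whence one must continue downward. *)
fun desc :: "nat \<Rightarrow> nat \<Rightarrow> nat set" where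
  "desc 0 j = {j}"
| "desc (Suc i) j = desc i (3 * j) \<union> desc i (3 * j + 1)"

definition pt_exists :: "nat \<Rightarrow> nat \<Rightarrow> nat \<Rightarrow> bool" where
  "pt_exists k i j \<longleftrightarrow> i < k \<and> 2 * j < 3 ^ (k - i)"

(* two blue vertices (by blue index) are joined by a smooth curve iff the curve climbs
   from one to some p_{i,j}, crosses the semicircle of level i joining p_{i,j}, p_{i,j+1},
   and descends to the other *)
definition blue_adj :: "nat \<Rightarrow> nat \<Rightarrow> nat \<Rightarrow> bool" where
  "blue_adj k a b \<longleftrightarrow>
     (\<exists>i j. pt_exists k i j \<and> pt_exists k i (j + 1) \<and>
        ((a \<in> desc i j \<and> b \<in> desc i (j + 1)) \<or> (b \<in> desc i j \<and> a \<in> desc i (j + 1))))"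

definition G_verts :: "nat \<Rightarrow> nat set" where
  "G_verts k = {1..3 ^ k}"

definition G_adj :: "nat \<Rightarrow> nat \<Rightarrow> nat \<Rightarrow> bool" where
  "G_adj k p q \<longleftrightarrow> p \<in> G_verts k \<and> q \<in> G_verts k \<and>
     (p = q + 1 \<or> q = p + 1 \<or>
      (odd p \<and> odd q \<and> blue_adj k ((p - 1) div 2) ((q - 1) div 2)))"

definition biadj :: "nat \<Rightarrow> nat set \<Rightarrow> bit mat" where
  "biadj k S = (let R = sorted_list_of_set S; C = sorted_list_of_set (G_verts k - S) in
     mat (length R) (length C) (\<lambda>(i, j). if G_adj k (R ! i) (C ! j) then 1 else 0))"

definition biadj_rank :: "nat \<Rightarrow> nat set \<Rightarrow> nat" where
  "biadj_rank k S = vec_space.rank (card S) (biadj k S)"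

definition same_side_interval :: "nat \<Rightarrow> nat set \<Rightarrow> nat \<Rightarrow> nat \<Rightarrow> bool" where
  "same_side_interval k S l u \<longleftrightarrow> 1 \<le> l \<and> l \<le> u \<and> u \<le> 3 ^ k \<and>
     ({l..u} \<subseteq> S \<or> {l..u} \<inter> S = {})"

definition blocks :: "nat \<Rightarrow> nat set \<Rightarrow> nat set set" where
  "blocks k S = {{l..u} | l u. same_side_interval k S l u \<and>
     (\<forall>l' u'. same_side_interval k S l' u' \<and> {l..u} \<subseteq> {l'..u'} \<longrightarrow> {l'..u'} = {l..u})}"

end

theory Submission
  imports Defs
begin

(* Every block but the first starts at a side change, a position l such that v(l-1) and v(l)
   lie on different sides.  One of these two vertices is yellow, and a yellow vertex is adjacent
   only to its two neighbours on the line.  Hence for side changes at pairwise distance at least 3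
   the edges v(l-1) v(l) span a submatrix of the biadjacency matrix that becomes unitriangular once
   the changes whose vertex in S is yellow are listed first; its size bounds the rank.  The side
   changes in a single residue class mod 3 are that far apart and make up a third of all of them,
   so there are at most 3r side changes and at most 3r + 1 blocks.  Only the short tracks of the
   yellow vertices matter. *)

lemma (in vec_space) card_le_rank_of_triangular_minor:
  fixes A :: "'a mat" and f g h :: "'b \<Rightarrow> nat"
  assumes A: "A \<in> carrier_mat n nc" and Y: "finite Y"
    and f: "\<And>e. e \<in> Y \<Longrightarrow> f e < n" and g: "\<And>e. e \<in> Y \<Longrightarrow> g e < nc"
    and diag: "\<And>e. e \<in> Y \<Longrightarrow> A $$ (f e, g e) = 1"
    and triangular: "\<And>e e'. e \<in> Y \<Longrightarrow> e' \<in> Y \<Longrightarrow> e \<noteq> e' \<Longrightarrow> h e \<le> h e' \<Longrightarrow> A $$ (f e, g e') = 0"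
  shows "card Y \<le> rank A"
proof -
  let ?v = "\<lambda>e. col A (g e)"
  have entry: "?v e' $ f e = A $$ (f e, g e')" if "e \<in> Y" "e' \<in> Y" for e e'
    using A f g that by auto
  have inj: "inj_on ?v Y"
  proof (rule inj_onI)
    fix e e' assume e: "e \<in> Y" "e' \<in> Y" "?v e = ?v e'"
    show "e = e'"
    proof (rule ccontr)
      assume "e \<noteq> e'"
      then consider "A $$ (f e, g e') = 0" | "A $$ (f e', g e) = 0"
        using triangular e by (metis nat_le_linear)
      then show False
        using entry[of e e] entry[of e e'] entry[of e' e] entry[of e' e'] diag e by cases auto
    qed
  qed
  have cols: "?v ` Y \<subseteq> set (cols A)"
    using A g by (auto simp: cols_def)
  have carrier: "?v ` Y \<subseteq> carrier_vec n"
    using A by auto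
  have indpt: "lin_indpt (?v ` Y)"
  proof
    assume "lin_dep (?v ` Y)"
    then obtain a v where comb: "lincomb a (?v ` Y) = 0\<^sub>v n" and v: "v \<in> ?v ` Y" "a v \<noteq> 0"
      using finite_lin_dep[of "?v ` Y"] Y carrier by auto
    define c where "c e = a (?v e)" for e
    have row_eq: "(\<Sum>e'\<in>Y. c e' * A $$ (f e, g e')) = 0" if e: "e \<in> Y" for e
    proof -
      have "0 = lincomb a (?v ` Y) $ f e" using comb f e by simp
      also have "\<dots> = (\<Sum>x\<in>?v ` Y. a x * x $ f e)"
        using lincomb_index carrier f e by simp
      also have "\<dots> = (\<Sum>e'\<in>Y. c e' * A $$ (f e, g e'))"
        using entry e by (simp add: sum.reindex[OF inj] c_def)
      finally show ?thesis by simp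
    qed
    (* row f e of the relation involves only c e and the c e' with h e' < h e *)
    have "c e = 0" if "e \<in> Y" for e
      using that
    proof (induction "h e" arbitrary: e rule: less_induct)
      case less
      have "c e' * A $$ (f e, g e') = 0" if "e' \<in> Y - {e}" for e'
        using less triangular that by (cases "h e \<le> h e'") auto
      then have "(\<Sum>e'\<in>Y. c e' * A $$ (f e, g e')) = c e * A $$ (f e, g e)"
        using less.prems by (subst sum.mono_neutral_right[OF Y, of "{e}"]) auto
      then show ?case using row_eq[OF less.prems] diag[OF less.prems] by simp
    qed
    with v show False by (auto simp: c_def)
  qed
  have "card (?v ` Y) \<le> rank A" by (rule rank_ge_card_indpt[OF A cols indpt])
  then show ?thesis using card_image[OF inj] by simp
qed

definition separated :: "nat \<Rightarrow> nat set \<Rightarrow> bool" where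
  "separated d Y \<longleftrightarrow> (\<forall>x\<in>Y. \<forall>y\<in>Y. x < y \<longrightarrow> x + d \<le> y)"

lemma separated_residue_class: "separated d {x \<in> X. x mod d = j}"
  unfolding separated_def
proof (intro ballI impI)
  fix x y assume "x \<in> {x \<in> X. x mod d = j}" "y \<in> {x \<in> X. x mod d = j}" and "x < y"
  then have "d dvd y - x"
    using mod_eq_dvd_iff_nat[of x y d] by (metis (mono_tags) less_imp_le mem_Collect_eq)
  then have "d \<le> y - x"
    using \<open>x < y\<close> by (intro dvd_imp_le) auto
  then show "x + d \<le> y"
    using \<open>x < y\<close> by arith
qed

lemma obtain_separated_subset:
  fixes X :: "nat set"
  assumes "finite X" and "0 < d"
  obtains Y where "Y \<subseteq> X" and "separated d Y" and "card X \<le> d * card Y"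
proof -
  define cls where "cls j = {x \<in> X. x mod d = j}" for j
  let ?sizes = "(\<lambda>i. card (cls i)) ` {..<d}"
  have "Max ?sizes \<in> ?sizes"
    using \<open>0 < d\<close> by (intro Max_in) auto
  then obtain j where j: "j < d" "card (cls j) = Max ?sizes"
    by auto
  have largest: "card (cls i) \<le> card (cls j)" if "i < d" for i
    unfolding j(2) using that by (intro Max_ge) auto
  have "X = (\<Union>i<d. cls i)"
    using \<open>0 < d\<close> by (auto simp: cls_def)
  then have "card X \<le> (\<Sum>i<d. card (cls i))"
    using card_UN_le[of "{..<d}" cls] by simp
  also have "\<dots> \<le> d * card (cls j)"
    using sum_bounded_above[of "{..<d}" "\<lambda>i. card (cls i)" "card (cls j)"] largest by simp
  finally have "card X \<le> d * card (cls j)" .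
  moreover have "cls j \<subseteq> X" and "separated d (cls j)"
    unfolding cls_def using separated_residue_class by auto
  ultimately show thesis
    using that by blast
qed

definition side_changes :: "nat \<Rightarrow> nat set \<Rightarrow> nat set" where
  "side_changes k S = {l. 2 \<le> l \<and> l \<le> 3 ^ k \<and> (l \<in> S) \<noteq> (l - 1 \<in> S)}"

lemma finite_side_changes: "finite (side_changes k S)"
  unfolding side_changes_def by (rule finite_subset[of _ "{..3 ^ k}"]) auto

lemma blocksE:
  assumes "B \<in> blocks k S"
  obtains l u where "B = {l..u}" and "same_side_interval k S l u"
    and "\<And>l' u'. same_side_interval k S l' u' \<Longrightarrow> {l..u} \<subseteq> {l'..u'} \<Longrightarrow> {l'..u'} = {l..u}"
  using assms unfolding blocks_def by blast

lemma Min_block: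
  assumes "B = {l..u}" and "same_side_interval k S l u"
  shows "Min B = l"
  using assms unfolding same_side_interval_def by (auto intro: Min_eqI)

lemma inj_on_Min_blocks: "inj_on Min (blocks k S)"
proof (rule inj_onI)
  fix B B' assume "B \<in> blocks k S" "B' \<in> blocks k S" and "Min B = Min B'"
  obtain l u where B: "B = {l..u}" "same_side_interval k S l u"
    and maximal: "\<And>l' u'. same_side_interval k S l' u' \<Longrightarrow> {l..u} \<subseteq> {l'..u'} \<Longrightarrow> {l'..u'} = {l..u}"
    using blocksE[OF \<open>B \<in> blocks k S\<close>] by blast
  obtain l' u' where B': "B' = {l'..u'}" "same_side_interval k S l' u'"
    and maximal': "\<And>l'' u''. same_side_interval k S l'' u'' \<Longrightarrow> {l'..u'} \<subseteq> {l''..u''} \<Longrightarrow> {l''..u''} = {l'..u'}"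
    using blocksE[OF \<open>B' \<in> blocks k S\<close>] by blast
  have "l = l'"
    using Min_block[OF B] Min_block[OF B'] \<open>Min B = Min B'\<close> by simp
  then show "B = B'"
    using maximal[OF B'(2)] maximal'[OF B(2)] B B' by (cases "u \<le> u'") auto
qed

lemma Min_block_in_side_changes:
  assumes "B \<in> blocks k S"
  shows "Min B \<in> insert 1 (side_changes k S)"
proof -
  obtain l u where B: "B = {l..u}" "same_side_interval k S l u"
    and maximal: "\<And>l' u'. same_side_interval k S l' u' \<Longrightarrow> {l..u} \<subseteq> {l'..u'} \<Longrightarrow> {l'..u'} = {l..u}"
    using blocksE[OF assms] by blast
  have bounds: "1 \<le> l" "l \<le> u" "u \<le> 3 ^ k"
    using B(2) unfolding same_side_interval_def by auto
  have "l \<in> side_changes k S" if "l \<noteq> 1"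
  proof (rule ccontr)
    assume "l \<notin> side_changes k S"
    then have "(l - 1 \<in> S) = (l \<in> S)"
      using bounds that unfolding side_changes_def by auto
    moreover have "{l..u} \<subseteq> S \<or> {l..u} \<inter> S = {}" and "l \<in> {l..u}"
      using B(2) bounds unfolding same_side_interval_def by auto
    ultimately have "insert (l - 1) {l..u} \<subseteq> S \<or> insert (l - 1) {l..u} \<inter> S = {}"
      by blast
    moreover have "{l - 1..u} = insert (l - 1) {l..u}"
      using bounds that by auto
    ultimately have "same_side_interval k S (l - 1) u"
      using bounds that unfolding same_side_interval_def by (simp; arith)
    then have "{l - 1..u} = {l..u}"
      by (rule maximal) auto
    then show False
      using bounds by (simp add: Icc_eq_Icc)
  qed
  then show ?thesis
    using Min_block[OF B] by auto
qed

lemma card_blocks_le: "card (blocks k S) \<le> Suc (card (side_changes k S))"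
proof -
  have "card (blocks k S) = card (Min ` blocks k S)"
    using card_image[OF inj_on_Min_blocks] by simp
  also have "\<dots> \<le> card (insert 1 (side_changes k S))"
    using Min_block_in_side_changes finite_side_changes by (intro card_mono) auto
  also have "\<dots> \<le> Suc (card (side_changes k S))"
    using finite_side_changes by (simp add: card_insert_if)
  finally show ?thesis .
qed

lemma G_adj_consecutive:
  assumes "2 \<le> l" and "l \<le> 3 ^ k"
  shows "G_adj k (l - 1) l" and "G_adj k l (l - 1)"
  using assms unfolding G_adj_def G_verts_def by auto

lemma G_adj_nonconsecutive_odd:
  assumes "G_adj k p q" and "p \<noteq> q + 1" and "q \<noteq> p + 1"
  shows "odd p \<and> odd q"
  using assms unfolding G_adj_def by auto

lemma card_le_biadj_rank:
  fixes p q h :: "'b \<Rightarrow> nat"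
  assumes S: "S \<subseteq> G_verts k" and Y: "finite Y"
    and p: "\<And>e. e \<in> Y \<Longrightarrow> p e \<in> S" and q: "\<And>e. e \<in> Y \<Longrightarrow> q e \<in> G_verts k - S"
    and adj: "\<And>e. e \<in> Y \<Longrightarrow> G_adj k (p e) (q e)"
    and nonadj: "\<And>e e'. e \<in> Y \<Longrightarrow> e' \<in> Y \<Longrightarrow> e \<noteq> e' \<Longrightarrow> h e \<le> h e' \<Longrightarrow> \<not> G_adj k (p e) (q e')"
  shows "card Y \<le> biadj_rank k S"
proof -
  define R where "R = sorted_list_of_set S"
  define C where "C = sorted_list_of_set (G_verts k - S)"
  have "finite S"
    using S finite_subset unfolding G_verts_def by blast
  then have R: "set R = S" "length R = card S"
    unfolding R_def by simp_all
  have C: "set C = G_verts k - S"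
    unfolding C_def G_verts_def by simp
  have "\<forall>e\<in>Y. \<exists>i. i < length R \<and> R ! i = p e"
    using p R(1) by (auto simp: in_set_conv_nth)
  then obtain f where f: "\<And>e. e \<in> Y \<Longrightarrow> f e < length R \<and> R ! f e = p e"
    by metis
  have "\<forall>e\<in>Y. \<exists>j. j < length C \<and> C ! j = q e"
    using q C by (auto simp: in_set_conv_nth)
  then obtain g where g: "\<And>e. e \<in> Y \<Longrightarrow> g e < length C \<and> C ! g e = q e"
    by metis
  have M: "biadj k S = mat (length R) (length C) (\<lambda>(i, j). if G_adj k (R ! i) (C ! j) then 1 else 0)"
    unfolding biadj_def R_def C_def Let_def ..
  have entry: "biadj k S $$ (f e, g e') = (if G_adj k (p e) (q e') then 1 else 0)"
    if "e \<in> Y" "e' \<in> Y" for e e'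
    using f[OF that(1)] g[OF that(2)] unfolding M by simp
  have "biadj k S \<in> carrier_mat (card S) (length C)"
    unfolding M R(2) by simp
  from vec_space.card_le_rank_of_triangular_minor[OF this Y, of f g h]
  show ?thesis
    unfolding biadj_rank_def using f g R(2) entry adj nonadj by simp
qed

lemma card_separated_side_changes_le_biadj_rank:
  assumes S: "S \<subseteq> G_verts k" and Y: "Y \<subseteq> side_changes k S" and "separated 3 Y"
  shows "card Y \<le> biadj_rank k S"
proof -
  define p where "p l = (if l \<in> S then l else l - 1)" for l
  define q where "q l = (if l \<in> S then l - 1 else l)" for l
  define h :: "nat \<Rightarrow> nat" where "h l = (if odd (p l) then 1 else 0)" for l
  have change: "2 \<le> l" "l \<le> 3 ^ k" "(l \<in> S) \<noteq> (l - 1 \<in> S)" if "l \<in> Y" for l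
    using Y that unfolding side_changes_def by auto
  have "finite Y"
    using Y finite_side_changes by (rule finite_subset)
  have "p l \<in> S" and "q l \<in> G_verts k - S" if "l \<in> Y" for l
    using change[OF that] unfolding p_def q_def G_verts_def by auto
  have "G_adj k (p l) (q l)" if "l \<in> Y" for l
    using change[OF that] G_adj_consecutive unfolding p_def q_def by auto
  have "\<not> G_adj k (p l) (q l')" if "l \<in> Y" "l' \<in> Y" "l \<noteq> l'" "h l \<le> h l'" for l l'
  proof
    assume adjacent: "G_adj k (p l) (q l')"
    have "l + 3 \<le> l' \<or> l' + 3 \<le> l"
      using \<open>separated 3 Y\<close> that(1-3) unfolding separated_def by (meson linorder_neqE_nat)
    moreover have "p l \<in> {l - 1, l}" and "q l' \<in> {l' - 1, l'}"
      unfolding p_def q_def by auto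
    ultimately have "p l \<noteq> q l' + 1" and "q l' \<noteq> p l + 1"
      using change[OF that(1)] change[OF that(2)] by auto
    with adjacent have "odd (p l) \<and> odd (q l')"
      by (rule G_adj_nonconsecutive_odd)
    moreover have "odd (q l') \<longleftrightarrow> even (p l')"
      using change[OF that(2)] unfolding p_def q_def by auto
    ultimately show False
      using \<open>h l \<le> h l'\<close> unfolding h_def by auto
  qed
  show ?thesis
    by (rule card_le_biadj_rank[OF S \<open>finite Y\<close>]) fact+
qed

theorem lemma12:
  fixes k r :: nat and S :: "nat set"
  assumes "k \<ge> 1"
    and "S \<subseteq> G_verts k"
    and "biadj_rank k S \<le> r"
  shows "card (blocks k S) \<le> 4 * r + 1"
proof -
  obtain Y where "Y \<subseteq> side_changes k S" and "separated 3 Y"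
    and changes: "card (side_changes k S) \<le> 3 * card Y"
    using obtain_separated_subset[OF finite_side_changes, where d = 3] by auto
  then have "card Y \<le> r"
    using card_separated_side_changes_le_biadj_rank[OF assms(2)] assms(3) by (meson le_trans)
  then show ?thesis
    using changes card_blocks_le[of k S] by linarith
qed

end
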